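(* Let $\mathcal{A}$ be a ring with identity $1$ and let $a,d\in\mathcal{A}$. Suppose $a$ is Mary invertible along $d$, and let $t=(ad)^\sharp a$, where $(ad)^\sharp$ denotes the group inverse of $ad$. Then $dt$ and $1-td$ are idempotents and $a$ is Djordjevic–Wei $(p,q)$-invertible with $p=dt$ and $q=1-td$; i.e. there exists $b\in\mathcal{A}$ with $bab=b$, $ba=dt$ and $1-ab=1-td$.
   Context: For $x,y$ in $\mathcal{A}$, $x\mathcal{A}=y\mathcal{A}$ means $x=yz$ and $y=xz'$ for some $z,z'\in\mathcal{A}$; $\mathcal{A}x=\mathcal{A}y$ is defined analogously with left multiplication. $a$ is Mary invertible along $d$ if there exists $b\in\mathcal{A}$ with $bab=b$, $b\mathcal{A}=d\mathcal{A}$, $\mathcal{A}b=\mathcal{A}d$. The group inverse of $c\in\mathcal{A}$ is the (unique) $c^\sharp$ with $cc^\sharp c=c$, $c^\sharp cc^\sharp=c^\sharp$, $cc^\sharp=c^\sharp c$; it is known (Mary) that if $a$ is Mary invertible along $d$ then $ad$ is group invertible, so $t$ is well defined. Given idempotents $p,q\in\mathcal{A}$, $a$ is Djordjevic–Wei $(p,q)$-invertible if there exists $b\in\mathcal{A}$ with $bab=b$, $ba=p$, $1-ab=q$. *)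

theory Defs
  imports Main
begin

definition right_ideal_eq :: "'a::ring_1 \<Rightarrow> 'a \<Rightarrow> bool" where
  "right_ideal_eq x y \<longleftrightarrow> (\<exists>z z'. x = y * z \<and> y = x * z')"

definition left_ideal_eq :: "'a::ring_1 \<Rightarrow> 'a \<Rightarrow> bool" where
  "left_ideal_eq x y \<longleftrightarrow> (\<exists>z z'. x = z * y \<and> y = z' * x)"

definition mary_invertible_along :: "'a::ring_1 \<Rightarrow> 'a \<Rightarrow> bool" where
  "mary_invertible_along a d \<longleftrightarrow>
     (\<exists>b. b * a * b = b \<and> right_ideal_eq b d \<and> left_ideal_eq b d)"

definition is_group_inverse :: "'a::ring_1 \<Rightarrow> 'a \<Rightarrow> bool" where
  "is_group_inverse c x \<longleftrightarrow> c * x * c = c \<and> x * c * x = x \<and> c * x = x * c"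

definition group_inverse :: "'a::ring_1 \<Rightarrow> 'a" where
  "group_inverse c = (THE x. is_group_inverse c x)"

definition idempotent :: "'a::ring_1 \<Rightarrow> bool" where
  "idempotent e \<longleftrightarrow> e * e = e"

definition dw_invertible :: "'a::ring_1 \<Rightarrow> 'a \<Rightarrow> 'a \<Rightarrow> bool" where
  "dw_invertible a p q \<longleftrightarrow> (\<exists>b. b * a * b = b \<and> b * a = p \<and> 1 - a * b = q)"

end

theory Submission
  imports Defs
begin

text \<open>If \<open>b\<close> is the Mary inverse of \<open>a\<close> along \<open>d\<close> and \<open>b = d z\<close>, then
  \<open>x = a b z a b\<close> is the group inverse of \<open>a d\<close>, with \<open>a d x = x a d = a b\<close>.
  Hence \<open>t = x a\<close> satisfies \<open>d t = b a\<close> and \<open>t d = a b\<close>, and \<open>b\<close> itself witnesses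
  the Djordjevic-Wei invertibility, since \<open>b a\<close> and \<open>1 - a b\<close> are idempotent for
  every outer inverse \<open>b\<close> of \<open>a\<close>.\<close>

lemma group_inverse_unique:
  fixes c x y :: "'a::ring_1"
  assumes "is_group_inverse c x" "is_group_inverse c y"
  shows "x = y"
proof -
  have x: "c*x*c = c" "x*c*x = x" "c*x = x*c"
    and y: "c*y*c = c" "y*c*y = y" "c*y = y*c"
    using assms unfolding is_group_inverse_def by auto
  have cx: "c*x = y*c"
  proof -
    have "c*x = y*(c*(c*x))" using y by (metis mult.assoc)
    also have "c*(c*x) = c" using x by (metis mult.assoc)
    finally show ?thesis .
  qed
  have cy: "c*y = x*c"
  proof -
    have "c*y = x*(c*(c*y))" using x by (metis mult.assoc)
    also have "c*(c*y) = c" using y by (metis mult.assoc)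
    finally show ?thesis .
  qed
  have "x = x*(c*x)" using x(2) by (simp add: mult.assoc)
  also have "\<dots> = (x*c)*y" using cy x(3) by (simp add: mult.assoc)
  also have "\<dots> = y" using cx x(3) y(2) by simp
  finally show ?thesis .
qed

lemma group_inverse_eqI:
  fixes c x :: "'a::ring_1"
  assumes "is_group_inverse c x"
  shows "group_inverse c = x"
  unfolding group_inverse_def using assms group_inverse_unique by blast

lemma idempotent_one_minus_iff:
  fixes e :: "'a::ring_1"
  shows "idempotent (1 - e) \<longleftrightarrow> idempotent e"
  unfolding idempotent_def by (simp add: algebra_simps)

lemma idempotent_outer_inverse_left:
  fixes a b :: "'a::ring_1"
  assumes "b*a*b = b"
  shows "idempotent (b*a)"
  using assms unfolding idempotent_def by (simp add: mult.assoc [symmetric])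

lemma idempotent_outer_inverse_right:
  fixes a b :: "'a::ring_1"
  assumes "b*a*b = b"
  shows "idempotent (a*b)"
  using assms unfolding idempotent_def by (metis mult.assoc)

lemma dw_invertible_outer_inverse:
  fixes a b :: "'a::ring_1"
  assumes "b*a*b = b"
  shows "dw_invertible a (b*a) (1 - a*b)"
  unfolding dw_invertible_def using assms by blast

definition inverse_along :: "'a::ring_1 \<Rightarrow> 'a \<Rightarrow> 'a \<Rightarrow> bool" where
  "inverse_along a d b \<longleftrightarrow> b*a*b = b \<and> right_ideal_eq b d \<and> left_ideal_eq b d"

lemma mary_invertible_along_iff:
  "mary_invertible_along a d \<longleftrightarrow> (\<exists>b. inverse_along a d b)"
  unfolding mary_invertible_along_def inverse_along_def ..

lemma inverse_along_mult_right:
  fixes a b d :: "'a::ring_1"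
  assumes "inverse_along a d b"
  shows "b*a*d = d"
proof -
  obtain z' where "d = b*z'" and "b*a*b = b"
    using assms unfolding inverse_along_def right_ideal_eq_def by blast
  then show ?thesis by (metis mult.assoc)
qed

lemma inverse_along_mult_left:
  fixes a b d :: "'a::ring_1"
  assumes "inverse_along a d b"
  shows "d*a*b = d"
proof -
  obtain w' where "d = w'*b" and "b*a*b = b"
    using assms unfolding inverse_along_def left_ideal_eq_def by blast
  then show ?thesis by (metis mult.assoc)
qed

lemma inverse_along_factor_mult:
  fixes a b d z :: "'a::ring_1"
  assumes "inverse_along a d b" and "b = d*z"
  shows "b*z*(a*d) = b"
proof -
  obtain w where w: "b = w*d"
    using assms(1) unfolding inverse_along_def left_ideal_eq_def by blast
  have "b*z*(a*d) = w*(d*z)*a*d" using w by (simp add: mult.assoc)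
  also have "\<dots> = w*(b*a*d)" using assms(2) by (simp add: mult.assoc)
  also have "\<dots> = b" using inverse_along_mult_right [OF assms(1)] w by simp
  finally show ?thesis .
qed

lemma is_group_inverse_along:
  fixes a b d z :: "'a::ring_1"
  assumes "inverse_along a d b" and "b = d*z"
  shows "is_group_inverse (a*d) (a*b*z*a*b)"
    and "a*d*(a*b*z*a*b) = a*b" and "a*b*z*a*b*(a*d) = a*b"
proof -
  have bab: "b*a*b = b" using assms(1) unfolding inverse_along_def by blast
  note bad = inverse_along_mult_right [OF assms(1)]
  note dab = inverse_along_mult_left [OF assms(1)]
  show left: "a*d*(a*b*z*a*b) = a*b"
  proof -
    have "a*d*(a*b*z*a*b) = a*((d*a*b)*z)*a*b" by (simp add: mult.assoc)
    also have "\<dots> = a*(b*a*b)" using dab assms(2) by (simp add: mult.assoc)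
    finally show ?thesis using bab by simp
  qed
  show right: "a*b*z*a*b*(a*d) = a*b"
  proof -
    have "a*b*z*a*b*(a*d) = a*(b*z*(a*d))" using bad by (simp add: mult.assoc)
    then show ?thesis using inverse_along_factor_mult [OF assms] by simp
  qed
  have "a*b*(a*b*z*a*b) = a*b*z*a*b" using bab by (metis mult.assoc)
  then show "is_group_inverse (a*d) (a*b*z*a*b)"
    unfolding is_group_inverse_def using left right bad
    by (simp add: mult.assoc)
qed

lemma group_inverse_along_projections:
  fixes a b d :: "'a::ring_1"
  assumes "inverse_along a d b"
  shows "d*(group_inverse (a*d)*a) = b*a" and "group_inverse (a*d)*a*d = a*b"
proof -
  obtain z where z: "b = d*z"
    using assms unfolding inverse_along_def right_ideal_eq_def by blast
  have gi: "group_inverse (a*d) = a*b*z*a*b"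
    using group_inverse_eqI is_group_inverse_along(1) [OF assms z] by blast
  have "d*(group_inverse (a*d)*a) = (d*a*b)*z*a*b*a" using gi by (simp add: mult.assoc)
  also have "\<dots> = (b*a*b)*a"
    using inverse_along_mult_left [OF assms] z by (simp add: mult.assoc)
  finally show "d*(group_inverse (a*d)*a) = b*a"
    using assms unfolding inverse_along_def by simp
  show "group_inverse (a*d)*a*d = a*b"
    using gi is_group_inverse_along(3) [OF assms z] by (simp add: mult.assoc)
qed

theorem corollary2p4:
  fixes a d :: "'a::ring_1"
  assumes "mary_invertible_along a d"
  defines "t \<equiv> group_inverse (a * d) * a"
  shows "idempotent (d * t) \<and> idempotent (1 - t * d) \<and>
         dw_invertible a (d * t) (1 - t * d)"
proof -
  obtain b where b: "inverse_along a d b"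
    using assms(1) mary_invertible_along_iff by blast
  then have bab: "b*a*b = b" unfolding inverse_along_def by blast
  have "d*t = b*a" and "t*d = a*b"
    using group_inverse_along_projections [OF b] unfolding t_def by simp_all
  then show ?thesis
    using idempotent_outer_inverse_left [OF bab] idempotent_outer_inverse_right [OF bab]
      dw_invertible_outer_inverse [OF bab]
    by (simp add: idempotent_one_minus_iff)
qed

end
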